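(* Let $C(\cdot,t)$, $t\in(-\infty,+\infty)$, be a solution by closed convex smooth embedded curves of the flow $$\frac{\partial C(p,t)}{\partial t}=\Big(\lambda+\int_0^{\xi(p)}\varphi\,d\xi\Big)C+\frac{\varphi}{2}C_\xi$$ ($\lambda$ a real constant) whose centro-affine curvature $\varphi$ is uniformly bounded on $S^1\times(-\infty,+\infty)$. Then $E(t)=\oint_{C(\cdot,t)}\varphi^2\,d\xi$ satisfies $\lim_{t\to-\infty}E(t)=0$.
   Context: For $u,v\in\mathbb{R}^2$, $[u,v]$ denotes the determinant of the matrix with columns $u,v$. Each curve $C(\cdot,t):S^1\to\mathbb{R}^2$ is smooth, closed, with $[C,C_p]\neq0$, $[C_p,C_{pp}]\neq0$ (then $[C_p,C_{pp}]/[C,C_p]>0$). The centro-affine metric is $g=\sqrt{[C_p,C_{pp}]/[C,C_p]}$, centro-affine arc-length $\xi(p)=\int_{p_0}^p g\,dp$ (so $d\xi=g\,dp$), and centro-affine curvature $\varphi=[C_{\xi\xi},C]/[C_\xi,C]$. *)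

theory Defs
  imports "HOL-Analysis.Analysis"
begin

definition det2 :: "real \<times> real \<Rightarrow> real \<times> real \<Rightarrow> real" where
  "det2 u v = fst u * snd v - snd u * fst v"

fun Ck :: "nat \<Rightarrow> (real \<times> real \<Rightarrow> real \<times> real) \<Rightarrow> bool" where
  "Ck 0 f = continuous_on UNIV f"
| "Ck (Suc k) f = (\<exists>f1 f2. (\<forall>z. (f has_derivative (\<lambda>h. fst h *\<^sub>R f1 z + snd h *\<^sub>R f2 z)) (at z))
                         \<and> Ck k f1 \<and> Ck k f2)"

definition smooth_map :: "(real \<times> real \<Rightarrow> real \<times> real) \<Rightarrow> bool" where
  "smooth_map f = (\<forall>k. Ck k f)"

text \<open>A family of curves: C p t, p the (1-periodic) curve parameter, t time.\<close>
definition dP :: "(real \<Rightarrow> real \<Rightarrow> real \<times> real) \<Rightarrow> real \<Rightarrow> real \<Rightarrow> real \<times> real" where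
  "dP C p t = vector_derivative (\<lambda>q. C q t) (at p)"

definition dT :: "(real \<Rightarrow> real \<Rightarrow> real \<times> real) \<Rightarrow> real \<Rightarrow> real \<Rightarrow> real \<times> real" where
  "dT C p t = vector_derivative (\<lambda>s. C p s) (at t)"

definition ca_metric :: "(real \<Rightarrow> real \<Rightarrow> real \<times> real) \<Rightarrow> real \<Rightarrow> real \<Rightarrow> real" where
  "ca_metric C p t = sqrt (det2 (dP C p t) (dP (dP C) p t) / det2 (C p t) (dP C p t))"

definition Cxi :: "(real \<Rightarrow> real \<Rightarrow> real \<times> real) \<Rightarrow> real \<Rightarrow> real \<Rightarrow> real \<times> real" where
  "Cxi C p t = (1 / ca_metric C p t) *\<^sub>R dP C p t"

definition Cxixi :: "(real \<Rightarrow> real \<Rightarrow> real \<times> real) \<Rightarrow> real \<Rightarrow> real \<Rightarrow> real \<times> real" where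
  "Cxixi C p t = (1 / ca_metric C p t) *\<^sub>R dP (Cxi C) p t"

definition ca_curv :: "(real \<Rightarrow> real \<Rightarrow> real \<times> real) \<Rightarrow> real \<Rightarrow> real \<Rightarrow> real" where
  "ca_curv C p t = det2 (Cxixi C p t) (C p t) / det2 (Cxi C p t) (C p t)"

text \<open>E(t) = closed integral of phi^2 d xi = integral over one period of phi^2 g dp\<close>
definition energy :: "(real \<Rightarrow> real \<Rightarrow> real \<times> real) \<Rightarrow> real \<Rightarrow> real" where
  "energy C t = integral {0..1} (\<lambda>p. (ca_curv C p t)\<^sup>2 * ca_metric C p t)"

end

theory Submission
  imports Defs
begin

text \<open>
  Work in coordinates \<open>C = (X, Y)\<close> with \<open>u = [C, C\<^sub>p]\<close> and \<open>v = [C\<^sub>p, C\<^sub>p\<^sub>p]\<close>; then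
  \<open>g = sqrt (v / u)\<close> and \<open>\<phi> g = 3/2 u\<^sub>p / u - 1/2 v\<^sub>p / v\<close>. Writing the flow as
  \<open>C\<^sub>t = \<alpha> C + \<beta> C\<^sub>p\<close>, differentiation in \<open>p\<close> gives \<open>\<alpha>\<^sub>p = \<phi> g\<close> and \<open>\<beta> = \<phi> / (2 g)\<close>, and a direct
  computation yields the evolution equations
  \<open>g\<^sub>t = \<phi>\<^sup>2 g / 2\<close> and
  \<open>(\<phi>\<^sup>2 g)\<^sub>t = (\<phi> \<phi>\<^sub>\<xi>)\<^sub>p - \<phi>\<^sub>\<xi>\<^sup>2 g - \<phi>\<^sup>4 g / 2 + 4 \<phi>\<^sup>2 g\<close>.
  Integrating over a period, the centro-affine length \<open>L\<close> satisfies \<open>L' = E / 2\<close> and the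
  energy satisfies \<open>E' \<le> 4 E\<close>. Hence \<open>E\<close> decays at most exponentially backwards in time, so
  \<open>E (t) \<le> 2 e\<^sup>4 (L (t) - L (t - 1))\<close>; as \<open>L\<close> is nondecreasing and nonnegative, these increments
  tend to \<open>0\<close> as \<open>t \<rightarrow> -\<infinity>\<close>.
\<close>

section \<open>Smooth real functions of \<open>(p, t)\<close>\<close>

fun Ck_real :: "nat \<Rightarrow> (real \<times> real \<Rightarrow> real) \<Rightarrow> bool" where
  "Ck_real 0 f = continuous_on UNIV f"
| "Ck_real (Suc k) f = (\<exists>f1 f2. (\<forall>z. (f has_derivative (\<lambda>h. fst h * f1 z + snd h * f2 z)) (at z))
                         \<and> Ck_real k f1 \<and> Ck_real k f2)"

definition smooth_real :: "(real \<times> real \<Rightarrow> real) \<Rightarrow> bool" where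
  "smooth_real f = (\<forall>k. Ck_real k f)"

lemma Ck_real_SucI:
  assumes "\<And>z. (f has_derivative (\<lambda>h. fst h * fa z + snd h * fb z)) (at z)" "Ck_real k fa" "Ck_real k fb"
  shows "Ck_real (Suc k) f"
  using assms by (subst Ck_real.simps(2)) blast

lemma Ck_real_SucE:
  assumes "Ck_real (Suc k) f"
  obtains f1 f2 where "\<And>z. (f has_derivative (\<lambda>h. fst h * f1 z + snd h * f2 z)) (at z)"
    "Ck_real k f1" "Ck_real k f2"
  using assms by auto

lemma Ck_real_Suc_imp: "Ck_real (Suc k) f \<Longrightarrow> Ck_real k f"
proof (induction k arbitrary: f)
  case 0
  then obtain f1 f2 where "\<And>z. (f has_derivative (\<lambda>h. fst h * f1 z + snd h * f2 z)) (at z)"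
    by (metis Ck_real_SucE)
  then have "\<And>z. isCont f z" using has_derivative_continuous by blast
  then show ?case by (simp add: continuous_at_imp_continuous_on)
next
  case (Suc k)
  then obtain f1 f2 where d: "\<And>z. (f has_derivative (\<lambda>h. fst h * f1 z + snd h * f2 z)) (at z)"
    and "Ck_real (Suc k) f1" "Ck_real (Suc k) f2" by (metis Ck_real_SucE)
  then show ?case using Ck_real_SucI[OF d] Suc.IH by blast
qed

lemma Ck_real_const: "Ck_real k (\<lambda>z. c)"
proof (induction k arbitrary: c)
  case (Suc k)
  show ?case by (rule Ck_real_SucI[where fa="\<lambda>z. 0" and fb="\<lambda>z. 0"]) (simp_all add: Suc.IH)
qed simp

lemma Ck_real_add: "Ck_real k f \<Longrightarrow> Ck_real k g \<Longrightarrow> Ck_real k (\<lambda>z. f z + g z)"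
proof (induction k arbitrary: f g)
  case 0 then show ?case by (simp add: continuous_on_add)
next
  case (Suc k)
  obtain f1 f2 where f: "\<And>z. (f has_derivative (\<lambda>h. fst h * f1 z + snd h * f2 z)) (at z)"
    "Ck_real k f1" "Ck_real k f2" using Suc.prems(1) by (metis Ck_real_SucE)
  obtain g1 g2 where g: "\<And>z. (g has_derivative (\<lambda>h. fst h * g1 z + snd h * g2 z)) (at z)"
    "Ck_real k g1" "Ck_real k g2" using Suc.prems(2) by (metis Ck_real_SucE)
  show ?case
  proof (rule Ck_real_SucI[where fa="\<lambda>z. f1 z + g1 z" and fb="\<lambda>z. f2 z + g2 z"])
    fix z
    show "((\<lambda>z. f z + g z) has_derivative
        (\<lambda>h. fst h * (f1 z + g1 z) + snd h * (f2 z + g2 z))) (at z)"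
      by (rule has_derivative_eq_rhs[OF has_derivative_add[OF f(1) g(1)]])
         (simp add: fun_eq_iff algebra_simps)
  qed (rule Suc.IH[OF f(2) g(2)], rule Suc.IH[OF f(3) g(3)])
qed

lemma Ck_real_mult: "Ck_real k f \<Longrightarrow> Ck_real k g \<Longrightarrow> Ck_real k (\<lambda>z. f z * g z)"
proof (induction k arbitrary: f g)
  case 0 then show ?case by (simp add: continuous_on_mult)
next
  case (Suc k)
  obtain f1 f2 where f: "\<And>z. (f has_derivative (\<lambda>h. fst h * f1 z + snd h * f2 z)) (at z)"
    "Ck_real k f1" "Ck_real k f2" using Suc.prems(1) by (metis Ck_real_SucE)
  obtain g1 g2 where g: "\<And>z. (g has_derivative (\<lambda>h. fst h * g1 z + snd h * g2 z)) (at z)"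
    "Ck_real k g1" "Ck_real k g2" using Suc.prems(2) by (metis Ck_real_SucE)
  have fk: "Ck_real k f" "Ck_real k g" using Suc.prems Ck_real_Suc_imp by blast+
  show ?case
  proof (rule Ck_real_SucI[where fa="\<lambda>z. f1 z * g z + f z * g1 z" and fb="\<lambda>z. f2 z * g z + f z * g2 z"])
    fix z
    show "((\<lambda>z. f z * g z) has_derivative
        (\<lambda>h. fst h * (f1 z * g z + f z * g1 z) + snd h * (f2 z * g z + f z * g2 z))) (at z)"
      by (rule has_derivative_eq_rhs[OF has_derivative_mult[OF f(1) g(1)]])
         (simp add: fun_eq_iff algebra_simps)
  qed (rule Ck_real_add[OF Suc.IH[OF f(2) fk(2)] Suc.IH[OF fk(1) g(2)]],
       rule Ck_real_add[OF Suc.IH[OF f(3) fk(2)] Suc.IH[OF fk(1) g(3)]])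
qed

lemma Ck_real_inverse: "Ck_real k f \<Longrightarrow> (\<And>z. f z \<noteq> 0) \<Longrightarrow> Ck_real k (\<lambda>z. inverse (f z))"
proof (induction k arbitrary: f)
  case 0 then show ?case by (simp add: continuous_on_inverse)
next
  case (Suc k)
  obtain f1 f2 where f: "\<And>z. (f has_derivative (\<lambda>h. fst h * f1 z + snd h * f2 z)) (at z)"
    "Ck_real k f1" "Ck_real k f2" using Suc.prems(1) by (metis Ck_real_SucE)
  have inv: "Ck_real k (\<lambda>z. inverse (f z))" using Suc.IH Suc.prems Ck_real_Suc_imp by blast
  have m: "Ck_real k (\<lambda>z. - (h z * (inverse (f z) * inverse (f z))))" if "Ck_real k h" for h
    using Ck_real_mult[OF Ck_real_const[of k "-1"] Ck_real_mult[OF that Ck_real_mult[OF inv inv]]] by simp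
  show ?case
  proof (rule Ck_real_SucI[where fa="\<lambda>z. - (f1 z * (inverse (f z) * inverse (f z)))"
                            and fb="\<lambda>z. - (f2 z * (inverse (f z) * inverse (f z)))"])
    fix z
    show "((\<lambda>z. inverse (f z)) has_derivative (\<lambda>h. fst h * - (f1 z * (inverse (f z) * inverse (f z)))
        + snd h * - (f2 z * (inverse (f z) * inverse (f z))))) (at z)"
      by (rule has_derivative_eq_rhs[OF Deriv.has_derivative_inverse[OF Suc.prems(2) f(1)]])
         (simp add: fun_eq_iff algebra_simps)
  qed (rule m[OF f(2)], rule m[OF f(3)])
qed

lemma Ck_real_sqrt: "Ck_real k f \<Longrightarrow> (\<And>z. f z > 0) \<Longrightarrow> Ck_real k (\<lambda>z. sqrt (f z))"
proof (induction k arbitrary: f)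
  case 0 then show ?case by (simp add: continuous_on_real_sqrt)
next
  case (Suc k)
  obtain f1 f2 where f: "\<And>z. (f has_derivative (\<lambda>h. fst h * f1 z + snd h * f2 z)) (at z)"
    "Ck_real k f1" "Ck_real k f2" using Suc.prems(1) by (metis Ck_real_SucE)
  have sq: "Ck_real k (\<lambda>z. sqrt (f z))" using Suc.IH Suc.prems Ck_real_Suc_imp by blast
  have "\<And>z. sqrt (f z) \<noteq> 0" using Suc.prems(2) by (metis less_irrefl real_sqrt_eq_zero_cancel_iff)
  note inv = Ck_real_inverse[OF sq this]
  have m: "Ck_real k (\<lambda>z. h z * (inverse (sqrt (f z)) * (1/2)))" if "Ck_real k h" for h
    using Ck_real_mult[OF that Ck_real_mult[OF inv Ck_real_const[of k "1/2"]]] .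
  show ?case
  proof (rule Ck_real_SucI[where fa="\<lambda>z. f1 z * (inverse (sqrt (f z)) * (1/2))"
                            and fb="\<lambda>z. f2 z * (inverse (sqrt (f z)) * (1/2))"])
    fix z
    show "((\<lambda>z. sqrt (f z)) has_derivative (\<lambda>h. fst h * (f1 z * (inverse (sqrt (f z)) * (1/2)))
        + snd h * (f2 z * (inverse (sqrt (f z)) * (1/2))))) (at z)"
      by (rule has_derivative_eq_rhs[OF DERIV_compose_FDERIV[OF DERIV_real_sqrt[OF Suc.prems(2)] f(1)]])
         (simp add: fun_eq_iff algebra_simps)
  qed (rule m[OF f(2)], rule m[OF f(3)])
qed

lemma smooth_realE:
  assumes "smooth_real f"
  obtains fa fb where "\<And>z. (f has_derivative (\<lambda>h. fst h * fa z + snd h * fb z)) (at z)"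
    "smooth_real fa" "smooth_real fb"
proof -
  obtain fa fb where d: "\<And>z. (f has_derivative (\<lambda>h. fst h * fa z + snd h * fb z)) (at z)"
    using assms unfolding smooth_real_def by (metis Ck_real_SucE)
  have "Ck_real k fa \<and> Ck_real k fb" for k
  proof -
    obtain ga gb where d': "\<And>z. (f has_derivative (\<lambda>h. fst h * ga z + snd h * gb z)) (at z)"
      and "Ck_real k ga" "Ck_real k gb"
      using assms unfolding smooth_real_def by (metis Ck_real_SucE)
    moreover have "ga z = fa z \<and> gb z = fb z" for z
      using fun_cong[OF has_derivative_unique[OF d' d], of "(1,0)"]
            fun_cong[OF has_derivative_unique[OF d' d], of "(0,1)"] by simp
    ultimately show ?thesis by (metis ext)
  qed
  then show thesis using that[OF d] by (simp add: smooth_real_def)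
qed

lemma smooth_real_const [simp]: "smooth_real (\<lambda>z. c)"
  by (simp add: smooth_real_def Ck_real_const)

lemma smooth_real_add: "smooth_real f \<Longrightarrow> smooth_real g \<Longrightarrow> smooth_real (\<lambda>z. f z + g z)"
  by (simp add: smooth_real_def Ck_real_add)

lemma smooth_real_mult: "smooth_real f \<Longrightarrow> smooth_real g \<Longrightarrow> smooth_real (\<lambda>z. f z * g z)"
  by (simp add: smooth_real_def Ck_real_mult)

lemma smooth_real_inverse: "smooth_real f \<Longrightarrow> (\<And>z. f z \<noteq> 0) \<Longrightarrow> smooth_real (\<lambda>z. inverse (f z))"
  by (simp add: smooth_real_def Ck_real_inverse)

lemma smooth_real_sqrt: "smooth_real f \<Longrightarrow> (\<And>z. f z > 0) \<Longrightarrow> smooth_real (\<lambda>z. sqrt (f z))"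
  by (simp add: smooth_real_def Ck_real_sqrt)

lemma smooth_real_diff: "smooth_real f \<Longrightarrow> smooth_real g \<Longrightarrow> smooth_real (\<lambda>z. f z - g z)"
  using smooth_real_add[of f "\<lambda>z. -1 * g z"] smooth_real_mult[of "\<lambda>z. -1" g] by simp

lemma smooth_real_divide:
  "smooth_real f \<Longrightarrow> smooth_real g \<Longrightarrow> (\<And>z. g z \<noteq> 0) \<Longrightarrow> smooth_real (\<lambda>z. f z / g z)"
  using smooth_real_mult[OF _ smooth_real_inverse] by (simp add: divide_inverse)

lemma smooth_real_power: "smooth_real f \<Longrightarrow> smooth_real (\<lambda>z. f z ^ n)"
  by (induction n) (auto intro: smooth_real_mult)

lemma smooth_real_continuous_on: "smooth_real f \<Longrightarrow> continuous_on UNIV f"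
  by (metis Ck_real.simps(1) smooth_real_def)

lemma smooth_real_continuous_on_p: "smooth_real f \<Longrightarrow> continuous_on S (\<lambda>q. f (q, t))"
  by (intro continuous_on_compose2[OF smooth_real_continuous_on[of f]] continuous_intros) auto

lemma smooth_real_isCont_p: "smooth_real f \<Longrightarrow> isCont (\<lambda>q. f (q, t)) x"
  using smooth_real_continuous_on_p continuous_on_eq_continuous_at open_UNIV UNIV_I by blast

lemma smooth_real_integrable_on_p: "smooth_real f \<Longrightarrow> (\<lambda>q. f (q, t)) integrable_on {a..b}"
  by (rule integrable_continuous_real[OF smooth_real_continuous_on_p])

lemma Ck_components: "Ck k F \<Longrightarrow> Ck_real k (\<lambda>z. fst (F z)) \<and> Ck_real k (\<lambda>z. snd (F z))"
proof (induction k arbitrary: F)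
  case 0 then show ?case by (auto intro: continuous_on_fst continuous_on_snd)
next
  case (Suc k)
  then obtain f1 f2 where d: "\<And>z. (F has_derivative (\<lambda>h. fst h *\<^sub>R f1 z + snd h *\<^sub>R f2 z)) (at z)"
    and c: "Ck k f1" "Ck k f2" by auto
  have "Ck_real (Suc k) (\<lambda>z. fst (F z))"
  proof (rule Ck_real_SucI[where fa="\<lambda>z. fst (f1 z)" and fb="\<lambda>z. fst (f2 z)"])
    fix z show "((\<lambda>z. fst (F z)) has_derivative (\<lambda>h. fst h * fst (f1 z) + snd h * fst (f2 z))) (at z)"
      by (rule has_derivative_eq_rhs[OF has_derivative_fst[OF d]]) (simp add: fun_eq_iff)
  qed (use Suc.IH c in auto)
  moreover have "Ck_real (Suc k) (\<lambda>z. snd (F z))"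
  proof (rule Ck_real_SucI[where fa="\<lambda>z. snd (f1 z)" and fb="\<lambda>z. snd (f2 z)"])
    fix z show "((\<lambda>z. snd (F z)) has_derivative (\<lambda>h. fst h * snd (f1 z) + snd h * snd (f2 z))) (at z)"
      by (rule has_derivative_eq_rhs[OF has_derivative_snd[OF d]]) (simp add: fun_eq_iff)
  qed (use Suc.IH c in auto)
  ultimately show ?case by blast
qed

lemma smooth_map_components:
  assumes "smooth_map F"
  shows "smooth_real (\<lambda>z. fst (F z))" "smooth_real (\<lambda>z. snd (F z))"
  using assms Ck_components unfolding smooth_map_def smooth_real_def by blast+

definition dir_deriv :: "real \<times> real \<Rightarrow> (real \<times> real \<Rightarrow> real) \<Rightarrow> real \<times> real \<Rightarrow> real" where
  "dir_deriv e f z = deriv (\<lambda>s. f (z + s *\<^sub>R e)) 0"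

abbreviation Dp :: "(real \<times> real \<Rightarrow> real) \<Rightarrow> real \<times> real \<Rightarrow> real" where
  "Dp \<equiv> dir_deriv (1, 0)"

abbreviation Dt :: "(real \<times> real \<Rightarrow> real) \<Rightarrow> real \<times> real \<Rightarrow> real" where
  "Dt \<equiv> dir_deriv (0, 1)"

lemma has_derivative_line:
  assumes "\<And>z. (f has_derivative (\<lambda>h. fst h * fa z + snd h * fb z)) (at z)"
  shows "((\<lambda>s. f (z + s *\<^sub>R e)) has_real_derivative
           (fst e * fa (z + s0 *\<^sub>R e) + snd e * fb (z + s0 *\<^sub>R e))) (at s0)"
proof -
  have "((\<lambda>s. z + s *\<^sub>R e) has_derivative (\<lambda>h. h *\<^sub>R e)) (at s0)"
    by (auto intro!: derivative_eq_intros)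
  from has_derivative_compose[OF this assms] show ?thesis
    unfolding has_field_derivative_def
    by (rule has_derivative_eq_rhs) (auto simp: fun_eq_iff algebra_simps)
qed

lemma dir_deriv_eq:
  assumes "\<And>z. (f has_derivative (\<lambda>h. fst h * fa z + snd h * fb z)) (at z)"
  shows "dir_deriv e f z = fst e * fa z + snd e * fb z"
  unfolding dir_deriv_def using DERIV_imp_deriv[OF has_derivative_line[OF assms, of z e 0]] by simp

lemma smooth_real_dir_deriv [simp]:
  assumes "smooth_real f" shows "smooth_real (dir_deriv e f)"
proof -
  obtain fa fb where d: "\<And>z. (f has_derivative (\<lambda>h. fst h * fa z + snd h * fb z)) (at z)"
    and "smooth_real fa" "smooth_real fb"
    using smooth_realE[OF assms] by blast
  moreover have "dir_deriv e f = (\<lambda>z. fst e * fa z + snd e * fb z)"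
    by (rule ext) (rule dir_deriv_eq[OF d])
  ultimately show ?thesis by (simp add: smooth_real_add smooth_real_mult)
qed

lemma smooth_real_has_derivative_line:
  assumes "smooth_real f"
  shows "((\<lambda>s. f (z + s *\<^sub>R e)) has_real_derivative dir_deriv e f (z + s0 *\<^sub>R e)) (at s0)"
proof -
  obtain fa fb where d: "\<And>z. (f has_derivative (\<lambda>h. fst h * fa z + snd h * fb z)) (at z)"
    using smooth_realE[OF assms] by blast
  show ?thesis using has_derivative_line[OF d] dir_deriv_eq[OF d] by simp
qed

lemma smooth_real_Dp_deriv:
  "smooth_real f \<Longrightarrow> ((\<lambda>q. f (q, t)) has_real_derivative Dp f (q0, t)) (at q0 within S)"
  using smooth_real_has_derivative_line[of f "(0, t)" "(1, 0)" q0]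
  by (simp add: has_field_derivative_at_within)

lemma smooth_real_Dt_deriv:
  "smooth_real f \<Longrightarrow> ((\<lambda>s. f (p, s)) has_real_derivative Dt f (p, s0)) (at s0 within S)"
  using smooth_real_has_derivative_line[of f "(p, 0)" "(0, 1)" s0]
  by (simp add: has_field_derivative_at_within)

lemma dir_deriv_from_deriv:
  "((\<lambda>s. f (z + s *\<^sub>R e)) has_real_derivative D) (at 0) \<Longrightarrow> dir_deriv e f z = D"
  unfolding dir_deriv_def by (rule DERIV_imp_deriv)

lemma smooth_real_has_derivative_line_0:
  "smooth_real f \<Longrightarrow> ((\<lambda>s. f (z + s *\<^sub>R e)) has_real_derivative dir_deriv e f z) (at 0)"
  using smooth_real_has_derivative_line[of f z e 0] by simp

lemmas dir_deriv_intros = derivative_eq_intros smooth_real_has_derivative_line_0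

lemma dir_deriv_const [simp]: "dir_deriv e (\<lambda>z. c) = (\<lambda>z. 0)"
  by (rule ext, rule dir_deriv_from_deriv) (auto intro!: derivative_eq_intros)

lemma dir_deriv_add:
  "smooth_real f \<Longrightarrow> smooth_real g \<Longrightarrow> dir_deriv e (\<lambda>z. f z + g z) = (\<lambda>z. dir_deriv e f z + dir_deriv e g z)"
  by (rule ext, rule dir_deriv_from_deriv) (auto intro!: dir_deriv_intros)

lemma dir_deriv_diff:
  "smooth_real f \<Longrightarrow> smooth_real g \<Longrightarrow> dir_deriv e (\<lambda>z. f z - g z) = (\<lambda>z. dir_deriv e f z - dir_deriv e g z)"
  by (rule ext, rule dir_deriv_from_deriv) (auto intro!: dir_deriv_intros)

lemma dir_deriv_mult:
  "smooth_real f \<Longrightarrow> smooth_real g \<Longrightarrow>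
    dir_deriv e (\<lambda>z. f z * g z) = (\<lambda>z. dir_deriv e f z * g z + f z * dir_deriv e g z)"
  by (rule ext, rule dir_deriv_from_deriv) (auto intro!: dir_deriv_intros)

lemma dir_deriv_divide:
  "smooth_real f \<Longrightarrow> smooth_real g \<Longrightarrow> (\<And>z. g z \<noteq> 0) \<Longrightarrow>
    dir_deriv e (\<lambda>z. f z / g z) = (\<lambda>z. (dir_deriv e f z * g z - f z * dir_deriv e g z) / (g z)\<^sup>2)"
  apply (rule ext, rule dir_deriv_from_deriv)
  apply (rule dir_deriv_intros | assumption | simp)+
  apply (simp add: field_simps power2_eq_square)
  done

lemma dir_deriv_sqrt:
  assumes "smooth_real f" "\<And>z. f z > 0"
  shows "dir_deriv e (\<lambda>z. sqrt (f z)) = (\<lambda>z. dir_deriv e f z / (2 * sqrt (f z)))"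
proof (rule ext, rule dir_deriv_from_deriv)
  fix z
  have "((\<lambda>s. sqrt (f (z + s *\<^sub>R e))) has_real_derivative
          (inverse (sqrt (f (z + 0 *\<^sub>R e))) / 2) * dir_deriv e f z) (at 0)"
    by (rule DERIV_chain2[OF DERIV_real_sqrt[OF assms(2)] smooth_real_has_derivative_line_0[OF assms(1)]])
  then show "((\<lambda>s. sqrt (f (z + s *\<^sub>R e))) has_real_derivative dir_deriv e f z / (2 * sqrt (f z))) (at 0)"
    by (simp add: field_simps)
qed

lemma dir_deriv_power2: "smooth_real f \<Longrightarrow> dir_deriv e (\<lambda>z. (f z)\<^sup>2) = (\<lambda>z. 2 * f z * dir_deriv e f z)"
  by (rule ext, rule dir_deriv_from_deriv) (auto intro!: dir_deriv_intros)

lemma vector_derivative_Pair_Dp: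
  assumes "smooth_real f" "smooth_real g"
  shows "vector_derivative (\<lambda>q. (f (q, t), g (q, t))) (at p) = (Dp f (p, t), Dp g (p, t))"
  by (intro vector_derivative_at has_vector_derivative_Pair
      smooth_real_Dp_deriv[OF assms(1), THEN has_real_derivative_iff_has_vector_derivative[THEN iffD1]]
      smooth_real_Dp_deriv[OF assms(2), THEN has_real_derivative_iff_has_vector_derivative[THEN iffD1]])

lemma vector_derivative_Pair_Dt:
  assumes "smooth_real f" "smooth_real g"
  shows "vector_derivative (\<lambda>s. (f (p, s), g (p, s))) (at t) = (Dt f (p, t), Dt g (p, t))"
  by (intro vector_derivative_at has_vector_derivative_Pair
      smooth_real_Dt_deriv[OF assms(1), THEN has_real_derivative_iff_has_vector_derivative[THEN iffD1]]
      smooth_real_Dt_deriv[OF assms(2), THEN has_real_derivative_iff_has_vector_derivative[THEN iffD1]])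

lemma has_real_derivative_integral_p:
  assumes f: "smooth_real f"
  shows "((\<lambda>s. integral {a..b} (\<lambda>q. f (q, s))) has_real_derivative
           integral {a..b} (\<lambda>q. Dt f (q, t))) (at t)"
proof -
  have cont: "continuous_on UNIV (\<lambda>y::real \<times> real. Dt f (snd y, fst y))"
    by (intro continuous_on_compose2[OF smooth_real_continuous_on[OF smooth_real_dir_deriv[OF f]]]
        continuous_intros) auto
  have "((\<lambda>s. integral (cbox a b) (\<lambda>q. f (q, s))) has_field_derivative
          integral (cbox a b) (\<lambda>q. Dt f (q, t))) (at t within UNIV)"
  proof (rule leibniz_rule_field_derivative[where f="\<lambda>s q. f (q, s)" and fx="\<lambda>s q. Dt f (q, s)"])
    show "\<And>s q. ((\<lambda>s. f (q, s)) has_field_derivative Dt f (q, s)) (at s within UNIV)"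
      using smooth_real_Dt_deriv[OF f] by blast
    show "\<And>s. (\<lambda>q. f (q, s)) integrable_on cbox a b"
      by (rule integrable_continuous[OF smooth_real_continuous_on_p[OF f]])
    show "continuous_on (UNIV \<times> cbox a b) (\<lambda>(s, q). Dt f (q, s))"
      using continuous_on_subset[OF cont, of "UNIV \<times> cbox a b"] by (simp add: case_prod_beta')
  qed auto
  then show ?thesis by simp
qed

lemma has_real_derivative_integral_upper:
  assumes "continuous_on UNIV g" "a < x"
  shows "((\<lambda>y. integral {a..y} g) has_real_derivative g x) (at x)"
proof -
  have "((\<lambda>y. integral {a..y} g) has_real_derivative g x) (at x within {a..x + 1})"
    by (rule integral_has_real_derivative[OF continuous_on_subset[OF assms(1)]]) (use assms(2) in auto)
  then show ?thesis using assms(2) by (simp add: at_within_Icc_at)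
qed

lemma integral_Dp:
  "smooth_real f \<Longrightarrow> a \<le> b \<Longrightarrow> integral {a..b} (\<lambda>q. Dp f (q, t)) = f (b, t) - f (a, t)"
  by (intro integral_unique fundamental_theorem_of_calculus)
     (simp_all add: has_real_derivative_iff_has_vector_derivative[symmetric] smooth_real_Dp_deriv)

lemma Dt_diff_eq_integral_Dt_Dp:
  assumes f: "smooth_real f" and "a \<le> x"
  shows "Dt f (x, t) - Dt f (a, t) = integral {a..x} (\<lambda>q. Dt (Dp f) (q, t))"
proof -
  have "((\<lambda>s. f (x, s) - f (a, s)) has_real_derivative Dt f (x, t) - Dt f (a, t)) (at t)"
    by (intro derivative_intros smooth_real_Dt_deriv[OF f])
  moreover have "(\<lambda>s. f (x, s) - f (a, s)) = (\<lambda>s. integral {a..x} (\<lambda>q. Dp f (q, s)))"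
    using integral_Dp[OF assms] by simp
  ultimately have "((\<lambda>s. integral {a..x} (\<lambda>q. Dp f (q, s))) has_real_derivative Dt f (x, t) - Dt f (a, t)) (at t)"
    by simp
  from DERIV_unique[OF this has_real_derivative_integral_p[OF smooth_real_dir_deriv[OF f]]]
  show ?thesis .
qed

lemma Dt_Dp_commute:
  assumes f: "smooth_real f"
  shows "Dt (Dp f) = Dp (Dt f)"
proof (rule ext, clarify)
  fix p t :: real
  have "continuous_on UNIV (\<lambda>q. Dt (Dp f) (q, t))"
    by (intro smooth_real_continuous_on_p smooth_real_dir_deriv f)
  from has_real_derivative_integral_upper[OF this, of "p - 1" p]
  have "((\<lambda>x. Dt f (p - 1, t) + integral {p - 1..x} (\<lambda>q. Dt (Dp f) (q, t)))
          has_real_derivative Dt (Dp f) (p, t)) (at p)"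
    by (auto intro: derivative_eq_intros)
  then have "((\<lambda>x. Dt f (x, t)) has_real_derivative Dt (Dp f) (p, t)) (at p)"
  proof (rule has_field_derivative_transform_within_open[where S="{p - 1<..}"])
    fix x assume "x \<in> {p - 1<..}"
    then show "Dt f (p - 1, t) + integral {p - 1..x} (\<lambda>q. Dt (Dp f) (q, t)) = Dt f (x, t)"
      using Dt_diff_eq_integral_Dt_Dp[OF f, of "p - 1" x t] by simp
  qed auto
  from DERIV_unique[OF this smooth_real_Dp_deriv[OF smooth_real_dir_deriv[OF f]]]
  show "Dt (Dp f) (p, t) = Dp (Dt f) (p, t)" .
qed

section \<open>Functions of period \<open>1\<close> in \<open>p\<close>\<close>

definition periodic_p :: "(real \<times> real \<Rightarrow> real) \<Rightarrow> bool" where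
  "periodic_p f \<longleftrightarrow> (\<forall>p t. f (p + 1, t) = f (p, t))"

lemma periodic_p_dir_deriv:
  assumes "periodic_p f" shows "periodic_p (dir_deriv e f)"
  unfolding periodic_p_def
proof (intro allI)
  fix p t
  have "(\<lambda>s. f ((p + 1, t) + s *\<^sub>R e)) = (\<lambda>s. f ((p, t) + s *\<^sub>R e))"
  proof
    fix s
    have "f ((p + s * fst e) + 1, t + s * snd e) = f (p + s * fst e, t + s * snd e)"
      using assms unfolding periodic_p_def by blast
    then show "f ((p + 1, t) + s *\<^sub>R e) = f ((p, t) + s *\<^sub>R e)"
      by (cases e) (simp add: algebra_simps)
  qed
  then show "dir_deriv e f (p + 1, t) = dir_deriv e f (p, t)" unfolding dir_deriv_def by simp
qed

lemma periodic_p_nat: "periodic_p f \<Longrightarrow> f (p + real n, t) = f (p, t)"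
proof (induction n)
  case (Suc n)
  have "f (p + real (Suc n), t) = f ((p + real n) + 1, t)" by (simp add: algebra_simps)
  also have "\<dots> = f (p + real n, t)" using Suc.prems unfolding periodic_p_def by blast
  finally show ?case using Suc by simp
qed simp

lemma periodic_p_int:
  assumes "periodic_p f" shows "f (p + of_int n, t) = f (p, t)"
proof (cases "n \<ge> 0")
  case True
  then show ?thesis using periodic_p_nat[OF assms, of p "nat n" t] by simp
next
  case False
  have "f (p + of_int n, t) = f ((p + of_int n) + real (nat (-n)), t)"
    using periodic_p_nat[OF assms, of "p + of_int n" "nat (-n)" t] by simp
  also have "\<dots> = f (p, t)" using False by simp
  finally show ?thesis .
qed

lemma periodic_p_reduce:
  obtains q where "q \<in> {a..<a + 1}" "\<And>f. periodic_p f \<Longrightarrow> f (p, t) = f (q, t)"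
proof -
  define n where "n = \<lfloor>p - a\<rfloor>"
  have "of_int n \<le> p - a" "p - a < of_int n + 1"
    using floor_correct[of "p - a"] unfolding n_def by auto
  then have "p - of_int n \<in> {a..<a + 1}" by simp
  moreover have "f (p, t) = f (p - of_int n, t)" if "periodic_p f" for f
    using periodic_p_int[OF that, of "p - of_int n" n t] by simp
  ultimately show thesis using that by blast
qed

lemma integral_Dp_periodic:
  "smooth_real f \<Longrightarrow> periodic_p f \<Longrightarrow> integral {a..a + 1} (\<lambda>q. Dp f (q, t)) = 0"
  by (simp add: integral_Dp periodic_p_def)

lemma derivatives_at_global_max:
  fixes f :: "real \<Rightarrow> real"
  assumes f': "\<And>x. (f has_real_derivative f' x) (at x)"
    and f'': "\<And>x. (f' has_real_derivative f'' x) (at x)"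
    and max: "\<And>y. f y \<le> f x"
  shows "f' x = 0" "f'' x \<le> 0"
proof -
  show "f' x = 0"
    using DERIV_local_max[OF f' zero_less_one] max by simp
  show "f'' x \<le> 0"
  proof (rule ccontr)
    assume "\<not> f'' x \<le> 0"
    then have "f'' x > 0" by simp
    then obtain d where d: "d > 0" "\<And>h. 0 < h \<Longrightarrow> h < d \<Longrightarrow> f' x < f' (x + h)"
      using DERIV_pos_inc_right[OF f''] by blast
    obtain z where z: "x < z" "z < x + d/2" "f (x + d/2) - f x = (x + d/2 - x) * f' z"
      using MVT2[of x "x + d/2" f f'] f' d(1) by auto
    have "f' z > 0" using d(2)[of "z - x"] z \<open>f' x = 0\<close> by simp
    then have "(x + d/2 - x) * f' z > 0" using d(1) by simp
    then have "f (x + d/2) > f x" using z(3) by linarith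
    then show False using max[of "x + d/2"] by simp
  qed
qed

lemma continuous_nonzero_same_sign:
  fixes w :: "real \<Rightarrow> real"
  assumes cont: "continuous_on UNIV w" and nz: "\<And>x. w x \<noteq> 0" and "w a > 0"
  shows "w b > 0"
proof (rule ccontr)
  assume "\<not> w b > 0"
  then have "w b < 0" using nz[of b] by linarith
  have cont': "continuous_on {x..y} w" for x y
    using continuous_on_subset[OF cont] by blast
  have "\<exists>x. w x = 0"
  proof (cases "b \<le> a")
    case True
    then show ?thesis using IVT'[of w b 0 a, OF _ _ True cont'] \<open>w b < 0\<close> \<open>w a > 0\<close> by auto
  next
    case False
    then show ?thesis using IVT2'[of w b 0 a, OF _ _ _ cont'] \<open>w b < 0\<close> \<open>w a > 0\<close> by auto
  qed
  then show False using nz by blast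
qed

lemma growth_bound_backward:
  fixes E E' :: "real \<Rightarrow> real"
  assumes dE: "\<And>t. (E has_real_derivative E' t) (at t)" and bound: "\<And>t. E' t \<le> c * E t"
    and "s \<le> t"
  shows "exp (- c * (t - s)) * E t \<le> E s"
proof -
  define m where "m x = exp (- c * x) * E x" for x
  have "m t \<le> m s"
  proof (rule DERIV_nonpos_imp_nonincreasing[OF \<open>s \<le> t\<close>])
    fix x
    have "(m has_real_derivative exp (- c * x) * (E' x - c * E x)) (at x)"
      unfolding m_def by (auto intro!: derivative_eq_intros dE simp: algebra_simps)
    moreover have "exp (- c * x) * (E' x - c * E x) \<le> 0"
      using bound[of x] by (simp add: mult_nonneg_nonpos)
    ultimately show "\<exists>y. (m has_real_derivative y) (at x) \<and> y \<le> 0" by blast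
  qed
  moreover have "exp (- c * t) = exp (- c * s) * exp (- c * (t - s))"
    by (simp flip: exp_add add: algebra_simps)
  ultimately show ?thesis unfolding m_def by (simp add: mult.assoc)
qed

lemma increment_tendsto_zero_at_bot:
  fixes L :: "real \<Rightarrow> real"
  assumes mono: "mono L" and nonneg: "\<And>t. 0 \<le> L t"
  shows "((\<lambda>t. L t - L (t - 1)) \<longlongrightarrow> 0) at_bot"
proof (rule tendstoI)
  fix \<epsilon> :: real assume "0 < \<epsilon>"
  have bdd: "bdd_below (range L)" by (intro bdd_belowI2[where m=0] nonneg)
  have "Inf (range L) < Inf (range L) + \<epsilon>" using \<open>0 < \<epsilon>\<close> by simp
  then have "\<exists>x\<in>range L. x < Inf (range L) + \<epsilon>"
    by (subst (asm) cInf_less_iff[OF _ bdd]) auto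
  then obtain t0 where t0: "L t0 < Inf (range L) + \<epsilon>" by blast
  have "dist (L t - L (t - 1)) 0 < \<epsilon>" if "t \<le> t0" for t
  proof -
    have "Inf (range L) \<le> L (t - 1)" using bdd by (rule cInf_lower[rotated]) simp
    moreover have "L (t - 1) \<le> L t" by (rule monoD[OF mono]) simp
    moreover have "L t \<le> L t0" by (rule monoD[OF mono \<open>t \<le> t0\<close>])
    ultimately show ?thesis using t0 by (simp add: dist_real_def)
  qed
  then show "\<forall>\<^sub>F t in at_bot. dist (L t - L (t - 1)) 0 < \<epsilon>"
    unfolding eventually_at_bot_linorder by blast
qed

lemma tendsto_zero_at_bot_of_growth_bound:
  fixes E E' L :: "real \<Rightarrow> real"
  assumes "0 \<le> c"
    and dE: "\<And>t. (E has_real_derivative E' t) (at t)" and bound: "\<And>t. E' t \<le> c * E t"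
    and E_nonneg: "\<And>t. 0 \<le> E t"
    and dL: "\<And>t. (L has_real_derivative E t) (at t)" and L_nonneg: "\<And>t. 0 \<le> L t"
  shows "(E \<longlongrightarrow> 0) at_bot"
proof (rule tendsto_sandwich[where f="\<lambda>_. 0" and h="\<lambda>t. exp c * (L t - L (t - 1))"])
  have "mono L"
  proof (rule monoI)
    fix x y :: real assume "x \<le> y"
    show "L x \<le> L y"
      by (rule DERIV_nonneg_imp_nondecreasing[OF \<open>x \<le> y\<close>]) (metis dL E_nonneg)
  qed
  from tendsto_mult_right_zero[OF increment_tendsto_zero_at_bot[OF this L_nonneg], of "exp c"]
  show "((\<lambda>t. exp c * (L t - L (t - 1))) \<longlongrightarrow> 0) at_bot" .
  show "\<forall>\<^sub>F t in at_bot. E t \<le> exp c * (L t - L (t - 1))"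
  proof (intro always_eventually allI)
    fix t
    obtain z where z: "t - 1 < z" "z < t" "L t - L (t - 1) = E z"
      using MVT2[of "t - 1" t L E] dL by auto
    have "c * (t - z) \<le> c * 1"
      by (rule mult_left_mono) (use z \<open>0 \<le> c\<close> in auto)
    then have "exp (- c) \<le> exp (- c * (t - z))" by simp
    then have "exp (- c) * E t \<le> exp (- c * (t - z)) * E t"
      using E_nonneg by (rule mult_right_mono)
    also have "\<dots> \<le> E z"
      using z by (intro growth_bound_backward[OF dE bound]) simp
    finally show "E t \<le> exp c * (L t - L (t - 1))"
      using z by (simp add: exp_minus field_simps)
  qed
qed (simp_all add: E_nonneg)

text \<open>At a point where \<open>|C|\<^sup>2\<close> is maximal, \<open>C \<cdot> C\<^sub>p = 0\<close> and \<open>|C\<^sub>p|\<^sup>2 + C \<cdot> C\<^sub>p\<^sub>p \<le> 0\<close>; together with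
  \<open>[C, C\<^sub>p] \<noteq> 0\<close> this forces \<open>[C, C\<^sub>p] [C\<^sub>p, C\<^sub>p\<^sub>p] > 0\<close>.\<close>

lemma sign_at_norm_maximum:
  fixes x y x1 y1 x2 y2 :: real
  assumes n1: "x * x1 + y * y1 = 0" and s: "x1\<^sup>2 + x * x2 + y1\<^sup>2 + y * y2 \<le> 0"
    and u: "x * y1 - y * x1 \<noteq> 0"
  shows "(x * y1 - y * x1) * (x1 * y2 - y1 * x2) > 0"
proof -
  define uu where "uu = x * y1 - y * x1"
  define vv where "vv = x1 * y2 - y1 * x2"
  have "x1 \<noteq> 0 \<or> y1 \<noteq> 0" "x \<noteq> 0 \<or> y \<noteq> 0" using u by auto
  then have p1: "x1\<^sup>2 + y1\<^sup>2 > 0" and p0: "x\<^sup>2 + y\<^sup>2 > 0"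
    by (auto simp: add_pos_nonneg add_nonneg_pos)
  have "(x\<^sup>2 + y\<^sup>2) * vv = - uu * (x * x2 + y * y2) + (x * x1 + y * y1) * (x * y2 - y * x2)"
    unfolding uu_def vv_def by (simp add: algebra_simps power2_eq_square)
  then have vv_eq: "(x\<^sup>2 + y\<^sup>2) * vv = - uu * (x * x2 + y * y2)"
    using n1 by simp
  have "(x\<^sup>2 + y\<^sup>2) * (uu * vv) = uu * ((x\<^sup>2 + y\<^sup>2) * vv)"
    by (simp add: algebra_simps)
  also have "\<dots> = uu\<^sup>2 * - (x * x2 + y * y2)"
    unfolding vv_eq by (simp add: power2_eq_square algebra_simps)
  also have "\<dots> \<ge> uu\<^sup>2 * (x1\<^sup>2 + y1\<^sup>2)"
    using s by (intro mult_left_mono) auto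
  finally have "(x\<^sup>2 + y\<^sup>2) * (uu * vv) \<ge> uu\<^sup>2 * (x1\<^sup>2 + y1\<^sup>2)" .
  moreover have "uu\<^sup>2 * (x1\<^sup>2 + y1\<^sup>2) > 0" using p1 u unfolding uu_def by simp
  ultimately have "(x\<^sup>2 + y\<^sup>2) * (uu * vv) > 0" by linarith
  then show ?thesis using p0 unfolding uu_def vv_def by (simp add: zero_less_mult_iff)
qed

lemma ca_curv_coordinates_identity:
  fixes x y x1 y1 x2 y2 g g1 u u1 v v1 :: real
  assumes g: "g > 0" and u: "u \<noteq> 0" and gs: "g\<^sup>2 = v / u"
    and g1: "g1 = ((v1 * u - v * u1) / u\<^sup>2) / (2 * g)"
    and ud: "u = x * y1 - y * x1" and u1d: "u1 = x * y2 - y * x2"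
  shows "(((1/g) * ((x2 * g - x1 * g1) / g\<^sup>2)) * y - ((1/g) * ((y2 * g - y1 * g1) / g\<^sup>2)) * x)
       / ((x1 / g) * y - (y1 / g) * x)
       = (3/2 * u1 / u - 1/2 * v1 / v) / g"
proof -
  have vv: "v = g\<^sup>2 * u" using gs u by (simp add: field_simps)
  have gnz: "g \<noteq> 0" using g by simp
  have "((x2 * g - x1 * g1) / g\<^sup>2) * y - ((y2 * g - y1 * g1) / g\<^sup>2) * x = (g1 * u - g * u1) / g\<^sup>2"
    unfolding ud u1d by (simp add: diff_divide_distrib[symmetric] algebra_simps)
  moreover have "((1/g) * ((x2 * g - x1 * g1) / g\<^sup>2)) * y - ((1/g) * ((y2 * g - y1 * g1) / g\<^sup>2)) * x
      = (((x2 * g - x1 * g1) / g\<^sup>2) * y - ((y2 * g - y1 * g1) / g\<^sup>2) * x) / g"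
    using gnz by (simp add: field_simps)
  ultimately have num: "((1/g) * ((x2 * g - x1 * g1) / g\<^sup>2)) * y - ((1/g) * ((y2 * g - y1 * g1) / g\<^sup>2)) * x
      = ((g1 * u - g * u1) / g\<^sup>2) / g"
    by simp
  have den: "(x1 / g) * y - (y1 / g) * x = - u / g"
    unfolding ud by (simp add: algebra_simps diff_divide_distrib[symmetric])
  have g1': "g1 * u = (v1 - g\<^sup>2 * u1) / (2 * g)"
    unfolding g1 vv using u g by (simp add: field_simps power2_eq_square)
  have "(((g1 * u - g * u1) / g\<^sup>2) / g) / (- u / g) = (g * u1 - g1 * u) / (g\<^sup>2 * u)"
    using gnz u by (simp add: field_simps)
  also have "\<dots> = (3 * g\<^sup>2 * u1 - v1) / (2 * g^3 * u)"
    unfolding diff_divide_distrib g1' using gnz u by (simp add: field_simps power2_eq_square power3_eq_cube)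
  also have "\<dots> = (3/2 * u1 / u - 1/2 * v1 / v) / g"
    unfolding vv using gnz u by (simp add: field_simps power2_eq_square power3_eq_cube)
  finally show ?thesis unfolding num den .
qed

lemma phi_g_flux_identity:
  fixes u v u1 v1 a c c1 p p1 g g1 :: real
  assumes u: "u \<noteq> 0" and v: "v \<noteq> 0" and g: "g > 0" and gs: "g\<^sup>2 = v / u"
    and pd: "p = 3/2 * u1 / u - 1/2 * v1 / v" and cd: "c = p * u / (2 * v)"
    and g1: "g1 = ((v1 * u - v * u1) / u\<^sup>2) / (2 * g)"
  shows "3/2 * (2 * a * u + c1 * u + c * u1) / u
           - 1/2 * (p * u1 - p1 * u + 2 * a * v + 3 * c1 * v + c * v1) / v
       = 2 * a + ((p1 * g - p * g1) / g\<^sup>2) / (2 * g)"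
proof -
  have vv: "v = g\<^sup>2 * u" using gs u by (simp add: field_simps)
  have lhs: "3/2 * (2 * a * u + c1 * u + c * u1) / u
      - 1/2 * (p * u1 - p1 * u + 2 * a * v + 3 * c1 * v + c * v1) / v
      = 2 * a + c * p + (p1 * u - p * u1) / (2 * v)"
    unfolding pd using u v by (simp add: field_simps)
  have rhs: "((p1 * g - p * g1) / g\<^sup>2) / (2 * g) = p1 * u / (2 * v) - p * (v1 * u - v * u1) / (4 * v\<^sup>2)"
    unfolding g1 vv using u g by (simp add: field_simps power2_eq_square)
  show ?thesis unfolding lhs rhs unfolding cd pd using u v by (simp add: field_simps power2_eq_square)
qed

lemma Dt_metric_identity:
  fixes u v u1 v1 a c c1 p p1 :: real
  assumes u: "u \<noteq> 0" and v: "v \<noteq> 0"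
    and pd: "p = 3/2 * u1 / u - 1/2 * v1 / v" and cd: "c = p * u / (2 * v)"
    and c1d: "c1 = ((p1 * u + p * u1) * (2 * v) - p * u * (2 * v1)) / (2 * v)\<^sup>2"
  shows "((p * u1 - p1 * u + 2 * a * v + 3 * c1 * v + c * v1) * u - v * (2 * a * u + c1 * u + c * u1)) / u\<^sup>2
       = p\<^sup>2"
  unfolding c1d cd pd using u v by (simp add: field_simps power2_eq_square)

lemma Dt_energy_density_identity:
  fixes p p1 r1 g g1 :: real
  assumes g: "g > 0"
  shows "(2 * p * (2 * p + (r1 * (2 * g) - ((p1 * g - p * g1) / g\<^sup>2) * (2 * g1)) / (2 * g)\<^sup>2) * g
           - p\<^sup>2 * (p\<^sup>2 / (2 * g))) / g\<^sup>2
     = (((p1 * ((p1 * g - p * g1) / g\<^sup>2) + p * r1) * g\<^sup>2 - p * ((p1 * g - p * g1) / g\<^sup>2) * (2 * g * g1))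
         / (g\<^sup>2)\<^sup>2)
       - ((p1 * g - p * g1) / g\<^sup>2)\<^sup>2 / g - p^4 / (2 * g^3) + 4 * p\<^sup>2 / g"
  using g by (simp add: field_simps power2_eq_square power3_eq_cube eval_nat_numeral)

section \<open>The flow in coordinates\<close>

locale ca_flow =
  fixes C :: "real \<Rightarrow> real \<Rightarrow> real \<times> real" and lam p0 :: real
  assumes smooth: "smooth_map (\<lambda>(p, t). C p t)"
    and closed: "\<And>p t. C (p + 1) t = C p t"
    and nondeg1: "\<And>p t. det2 (C p t) (dP C p t) \<noteq> 0"
    and nondeg2: "\<And>p t. det2 (dP C p t) (dP (dP C) p t) \<noteq> 0"
    and flow: "\<And>p t. p \<in> {p0..<p0 + 1} \<Longrightarrow>
        dT C p t = (lam + integral {p0..p} (\<lambda>q. ca_curv C q t * ca_metric C q t)) *\<^sub>R C p t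
                   + (ca_curv C p t / 2) *\<^sub>R Cxi C p t"
begin

definition X :: "real \<times> real \<Rightarrow> real" where "X z = fst (C (fst z) (snd z))"
definition Y :: "real \<times> real \<Rightarrow> real" where "Y z = snd (C (fst z) (snd z))"

lemma smooth_X [simp]: "smooth_real X" and smooth_Y [simp]: "smooth_real Y"
  using smooth_map_components[OF smooth] unfolding X_def[abs_def] Y_def[abs_def]
  by (simp_all add: case_prod_beta)

lemma periodic_X: "periodic_p X" and periodic_Y: "periodic_p Y"
  unfolding periodic_p_def X_def Y_def by (simp_all add: closed)

lemma C_coords: "C p t = (X (p, t), Y (p, t))"
  by (simp add: X_def Y_def)

lemma dP_C_coords: "dP C p t = (Dp X (p, t), Dp Y (p, t))"
proof -
  have "(\<lambda>q. C q t) = (\<lambda>q. (X (q, t), Y (q, t)))" using C_coords by blast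
  then show ?thesis unfolding dP_def by (simp add: vector_derivative_Pair_Dp)
qed

lemma dP_dP_C_coords: "dP (dP C) p t = (Dp (Dp X) (p, t), Dp (Dp Y) (p, t))"
proof -
  have "(\<lambda>q. dP C q t) = (\<lambda>q. (Dp X (q, t), Dp Y (q, t)))" using dP_C_coords by blast
  then show ?thesis
    unfolding dP_def[of "dP C"] by (simp add: vector_derivative_Pair_Dp)
qed

lemma dT_C_coords: "dT C p t = (Dt X (p, t), Dt Y (p, t))"
proof -
  have "(\<lambda>s. C p s) = (\<lambda>s. (X (p, s), Y (p, s)))" using C_coords by blast
  then show ?thesis unfolding dT_def by (simp add: vector_derivative_Pair_Dt)
qed

definition detCCp :: "real \<times> real \<Rightarrow> real" where
  "detCCp z = X z * Dp Y z - Y z * Dp X z"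

definition detCpCpp :: "real \<times> real \<Rightarrow> real" where
  "detCpCpp z = Dp X z * Dp (Dp Y) z - Dp Y z * Dp (Dp X) z"

lemma detCCp_nonzero: "detCCp z \<noteq> 0"
  using nondeg1[of "fst z" "snd z"] unfolding det2_def dP_C_coords detCCp_def by (simp add: C_coords)

lemma detCpCpp_nonzero: "detCpCpp z \<noteq> 0"
  using nondeg2[of "fst z" "snd z"] unfolding det2_def dP_C_coords dP_dP_C_coords detCpCpp_def by simp

lemma smooth_detCCp [simp]: "smooth_real detCCp" and smooth_detCpCpp [simp]: "smooth_real detCpCpp"
  unfolding detCCp_def[abs_def] detCpCpp_def[abs_def]
  by (intro smooth_real_diff smooth_real_mult smooth_real_dir_deriv smooth_X smooth_Y)+

lemma periodic_detCCp: "periodic_p detCCp" and periodic_detCpCpp: "periodic_p detCpCpp"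
  using periodic_p_dir_deriv[OF periodic_X] periodic_p_dir_deriv[OF periodic_Y]
    periodic_p_dir_deriv[OF periodic_p_dir_deriv[OF periodic_X]]
    periodic_p_dir_deriv[OF periodic_p_dir_deriv[OF periodic_Y]] periodic_X periodic_Y
  unfolding detCCp_def detCpCpp_def periodic_p_def by simp_all

lemma Dp_detCCp: "Dp detCCp z = X z * Dp (Dp Y) z - Y z * Dp (Dp X) z"
  unfolding detCCp_def[abs_def] by (simp add: dir_deriv_diff dir_deriv_mult smooth_real_mult algebra_simps)

lemma Dp_detCpCpp: "Dp detCpCpp z = Dp X z * Dp (Dp (Dp Y)) z - Dp Y z * Dp (Dp (Dp X)) z"
  unfolding detCpCpp_def[abs_def] by (simp add: dir_deriv_diff dir_deriv_mult smooth_real_mult algebra_simps)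

lemma exists_detCCp_detCpCpp_pos: "\<exists>q. detCCp (q, t) * detCpCpp (q, t) > 0"
proof -
  define N where "N q = (X (q, t))\<^sup>2 + (Y (q, t))\<^sup>2" for q
  define N' where "N' q = 2 * (X (q, t) * Dp X (q, t) + Y (q, t) * Dp Y (q, t))" for q
  define N'' where "N'' q = 2 * ((Dp X (q, t))\<^sup>2 + X (q, t) * Dp (Dp X) (q, t)
                               + (Dp Y (q, t))\<^sup>2 + Y (q, t) * Dp (Dp Y) (q, t))" for q
  have dX: "\<And>f q. smooth_real f \<Longrightarrow> ((\<lambda>q. f (q, t)) has_real_derivative Dp f (q, t)) (at q)"
    using smooth_real_Dp_deriv by blast
  have dN: "(N has_real_derivative N' q) (at q)" for q
    unfolding N_def N'_def
    by (rule derivative_eq_intros dX smooth_X smooth_Y refl | simp)+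
  have dN': "(N' has_real_derivative N'' q) (at q)" for q
    unfolding N'_def N''_def
    by (rule derivative_eq_intros dX smooth_X smooth_Y smooth_real_dir_deriv refl | simp)+
       (simp add: algebra_simps power2_eq_square)
  have cont: "continuous_on {0..1} N"
    unfolding N_def by (intro continuous_intros smooth_real_continuous_on_p smooth_X smooth_Y)
  obtain qs where qs: "\<And>y. y \<in> {0..1} \<Longrightarrow> N y \<le> N qs"
    using continuous_attains_sup[OF compact_Icc _ cont] by blast
  have per: "periodic_p (\<lambda>z. (X z)\<^sup>2 + (Y z)\<^sup>2)"
    using periodic_X periodic_Y unfolding periodic_p_def by simp
  have max: "N y \<le> N qs" for y
  proof -
    obtain q where q: "q \<in> {0..<0 + 1}" "\<And>f. periodic_p f \<Longrightarrow> f (y, t) = f (q, t)"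
      using periodic_p_reduce[where a=0 and p=y and t=t] by blast
    have "N y = N q" using q(2)[OF per] unfolding N_def by simp
    also have "\<dots> \<le> N qs" using q(1) qs by simp
    finally show ?thesis .
  qed
  from derivatives_at_global_max[OF dN dN' max] show ?thesis
    using sign_at_norm_maximum[of "X (qs, t)" "Dp X (qs, t)" "Y (qs, t)" "Dp Y (qs, t)"
        "Dp (Dp X) (qs, t)" "Dp (Dp Y) (qs, t)"] detCCp_nonzero[of "(qs, t)"]
    unfolding N'_def N''_def detCCp_def detCpCpp_def by auto
qed

lemma detCCp_detCpCpp_pos: "detCCp z * detCpCpp z > 0"
proof -
  obtain p t where z: "z = (p, t)" by fastforce
  obtain q where q: "detCCp (q, t) * detCpCpp (q, t) > 0"
    using exists_detCCp_detCpCpp_pos by blast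
  have "continuous_on UNIV (\<lambda>q. detCCp (q, t) * detCpCpp (q, t))"
    by (intro continuous_on_mult smooth_real_continuous_on_p smooth_detCCp smooth_detCpCpp)
  then show ?thesis
    using continuous_nonzero_same_sign[of "\<lambda>q. detCCp (q, t) * detCpCpp (q, t)" q p] q
      detCCp_nonzero detCpCpp_nonzero
    unfolding z by simp
qed

definition ca_g :: "real \<times> real \<Rightarrow> real" where
  "ca_g z = sqrt (detCpCpp z / detCCp z)"

lemma detCpCpp_div_detCCp_pos: "detCpCpp z / detCCp z > 0"
  using detCCp_detCpCpp_pos[of z] by (auto simp: zero_less_divide_iff zero_less_mult_iff)

lemma ca_g_pos: "ca_g z > 0"
  unfolding ca_g_def using detCpCpp_div_detCCp_pos by simp

lemma ca_g_nonzero: "ca_g z \<noteq> 0"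
  using ca_g_pos[of z] by simp

lemma ca_g_squared: "(ca_g z)\<^sup>2 = detCpCpp z / detCCp z"
  unfolding ca_g_def using detCpCpp_div_detCCp_pos[of z] by simp

lemma smooth_ca_g [simp]: "smooth_real ca_g"
  unfolding ca_g_def[abs_def]
  by (intro smooth_real_sqrt smooth_real_divide smooth_detCCp smooth_detCpCpp detCCp_nonzero
      detCpCpp_div_detCCp_pos)

lemma periodic_ca_g: "periodic_p ca_g"
  using periodic_detCCp periodic_detCpCpp unfolding periodic_p_def ca_g_def by simp

lemma ca_metric_eq: "ca_metric C p t = ca_g (p, t)"
  unfolding ca_metric_def ca_g_def det2_def dP_C_coords dP_dP_C_coords detCCp_def detCpCpp_def
  by (simp add: C_coords)

lemma Dp_ca_g:
  "Dp ca_g z = ((Dp detCpCpp z * detCCp z - detCpCpp z * Dp detCCp z) / (detCCp z)\<^sup>2) / (2 * ca_g z)"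
proof -
  have "Dp ca_g = (\<lambda>z. Dp (\<lambda>z. detCpCpp z / detCCp z) z / (2 * sqrt (detCpCpp z / detCCp z)))"
    unfolding ca_g_def[abs_def]
    by (rule dir_deriv_sqrt)
       (intro smooth_real_divide smooth_detCCp smooth_detCpCpp detCCp_nonzero, rule detCpCpp_div_detCCp_pos)
  then show ?thesis
    by (simp add: dir_deriv_divide detCCp_nonzero ca_g_def)
qed

text \<open>\<open>phi_g\<close> is \<open>\<phi> g\<close>, the density of \<open>\<phi> d\<xi>\<close> with respect to \<open>dp\<close>.\<close>

definition phi_g :: "real \<times> real \<Rightarrow> real" where
  "phi_g z = 3/2 * Dp detCCp z / detCCp z - 1/2 * Dp detCpCpp z / detCpCpp z"

lemma smooth_phi_g [simp]: "smooth_real phi_g"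
  unfolding phi_g_def[abs_def]
  by (intro smooth_real_diff smooth_real_divide smooth_real_mult smooth_real_const smooth_real_dir_deriv
      smooth_detCCp smooth_detCpCpp detCCp_nonzero detCpCpp_nonzero)

lemma periodic_phi_g: "periodic_p phi_g"
  using periodic_detCCp periodic_detCpCpp periodic_p_dir_deriv[OF periodic_detCCp]
    periodic_p_dir_deriv[OF periodic_detCpCpp]
  unfolding periodic_p_def phi_g_def by simp

lemma Cxi_coords: "Cxi C p t = (Dp X (p, t) / ca_g (p, t), Dp Y (p, t) / ca_g (p, t))"
  unfolding Cxi_def ca_metric_eq dP_C_coords by simp

lemma dP_Cxi_coords:
  "dP (Cxi C) p t = (Dp (\<lambda>z. Dp X z / ca_g z) (p, t), Dp (\<lambda>z. Dp Y z / ca_g z) (p, t))"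
proof -
  have "(\<lambda>q. Cxi C q t) = (\<lambda>q. ((\<lambda>z. Dp X z / ca_g z) (q, t), (\<lambda>z. Dp Y z / ca_g z) (q, t)))"
    using Cxi_coords by auto
  moreover have "smooth_real (\<lambda>z. Dp X z / ca_g z)" "smooth_real (\<lambda>z. Dp Y z / ca_g z)"
    by (intro smooth_real_divide smooth_real_dir_deriv smooth_X smooth_Y smooth_ca_g ca_g_nonzero)+
  ultimately show ?thesis
    unfolding dP_def[of "Cxi C"]
    by (simp add: vector_derivative_Pair_Dp[where f="\<lambda>z. Dp X z / ca_g z" and g="\<lambda>z. Dp Y z / ca_g z"])
qed

lemma ca_curv_eq: "ca_curv C p t = phi_g (p, t) / ca_g (p, t)"
proof -
  let ?g = "ca_g (p, t)" and ?g1 = "Dp ca_g (p, t)" and ?x = "X (p, t)" and ?y = "Y (p, t)"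
  let ?x1 = "Dp X (p, t)" and ?y1 = "Dp Y (p, t)" and ?x2 = "Dp (Dp X) (p, t)" and ?y2 = "Dp (Dp Y) (p, t)"
  have Dp_div: "Dp (\<lambda>z. Dp f z / ca_g z) (p, t) = (Dp (Dp f) (p, t) * ?g - Dp f (p, t) * ?g1) / ?g\<^sup>2"
    if "smooth_real f" for f
    by (subst dir_deriv_divide) (simp_all add: that ca_g_nonzero)
  have "ca_curv C p t = (((1/?g) * ((?x2 * ?g - ?x1 * ?g1) / ?g\<^sup>2)) * ?y - ((1/?g) * ((?y2 * ?g - ?y1 * ?g1) / ?g\<^sup>2)) * ?x)
       / ((?x1 / ?g) * ?y - (?y1 / ?g) * ?x)"
    unfolding ca_curv_def Cxixi_def ca_metric_eq dP_Cxi_coords Dp_div[OF smooth_X] Dp_div[OF smooth_Y]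
      Cxi_coords det2_def
    by (simp only: fst_conv snd_conv scaleR_Pair real_scaleR_def C_coords)
  also have "\<dots> = phi_g (p, t) / ?g"
    unfolding phi_g_def
    by (rule ca_curv_coordinates_identity[OF ca_g_pos detCCp_nonzero ca_g_squared Dp_ca_g
          detCCp_def Dp_detCCp])
  finally show ?thesis .
qed

definition energy_density :: "real \<times> real \<Rightarrow> real" where
  "energy_density z = (phi_g z)\<^sup>2 / ca_g z"

lemma smooth_energy_density [simp]: "smooth_real energy_density"
  unfolding energy_density_def[abs_def]
  by (intro smooth_real_divide smooth_real_power smooth_phi_g smooth_ca_g ca_g_nonzero)

lemma energy_density_nonneg: "energy_density z \<ge> 0"
  unfolding energy_density_def using ca_g_pos[of z] by simp

lemma energy_eq: "energy C = (\<lambda>t. integral {0..1} (\<lambda>p. energy_density (p, t)))"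
proof
  fix t
  have "(ca_curv C p t)\<^sup>2 * ca_metric C p t = energy_density (p, t)" for p
    unfolding ca_curv_eq ca_metric_eq energy_density_def using ca_g_nonzero[of "(p, t)"]
    by (simp add: power2_eq_square)
  then show "energy C t = integral {0..1} (\<lambda>p. energy_density (p, t))"
    unfolding energy_def by simp
qed

text \<open>\<open>C\<^sub>t = coeff_C C + coeff_Cp C\<^sub>p\<close>, solved by Cramer's rule.\<close>

definition coeff_C :: "real \<times> real \<Rightarrow> real" where
  "coeff_C z = (Dt X z * Dp Y z - Dt Y z * Dp X z) / detCCp z"

definition coeff_Cp :: "real \<times> real \<Rightarrow> real" where
  "coeff_Cp z = (X z * Dt Y z - Y z * Dt X z) / detCCp z"

lemma smooth_coeff_C [simp]: "smooth_real coeff_C"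
  unfolding coeff_C_def[abs_def]
  by (intro smooth_real_diff smooth_real_divide smooth_real_mult smooth_real_dir_deriv smooth_X smooth_Y
      smooth_detCCp detCCp_nonzero)

lemma smooth_coeff_Cp [simp]: "smooth_real coeff_Cp"
  unfolding coeff_Cp_def[abs_def]
  by (intro smooth_real_diff smooth_real_divide smooth_real_mult smooth_real_dir_deriv smooth_X smooth_Y
      smooth_detCCp detCCp_nonzero)

lemma periodic_coeff_C: "periodic_p coeff_C" and periodic_coeff_Cp: "periodic_p coeff_Cp"
  using periodic_p_dir_deriv[OF periodic_X] periodic_p_dir_deriv[OF periodic_Y] periodic_X periodic_Y
    periodic_detCCp
  unfolding coeff_C_def coeff_Cp_def periodic_p_def by simp_all

lemma Dt_X_decomp: "Dt X z = coeff_C z * X z + coeff_Cp z * Dp X z"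
proof -
  have "coeff_C z * X z + coeff_Cp z * Dp X z
      = ((Dt X z * Dp Y z - Dt Y z * Dp X z) * X z + (X z * Dt Y z - Y z * Dt X z) * Dp X z) / detCCp z"
    unfolding coeff_C_def coeff_Cp_def by (simp add: add_divide_distrib)
  also have "\<dots> = Dt X z * detCCp z / detCCp z"
    unfolding detCCp_def by (simp add: algebra_simps)
  finally show ?thesis using detCCp_nonzero[of z] by simp
qed

lemma Dt_Y_decomp: "Dt Y z = coeff_C z * Y z + coeff_Cp z * Dp Y z"
proof -
  have "coeff_C z * Y z + coeff_Cp z * Dp Y z
      = ((Dt X z * Dp Y z - Dt Y z * Dp X z) * Y z + (X z * Dt Y z - Y z * Dt X z) * Dp Y z) / detCCp z"
    unfolding coeff_C_def coeff_Cp_def by (simp add: add_divide_distrib)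
  also have "\<dots> = Dt Y z * detCCp z / detCCp z"
    unfolding detCCp_def by (simp add: algebra_simps)
  finally show ?thesis using detCCp_nonzero[of z] by simp
qed

lemma coeffs_on_period:
  assumes p: "p \<in> {p0..<p0 + 1}"
  shows "coeff_C (p, t) = lam + integral {p0..p} (\<lambda>q. phi_g (q, t))"
    and "coeff_Cp (p, t) = phi_g (p, t) / (2 * (ca_g (p, t))\<^sup>2)"
proof -
  define a where "a = lam + integral {p0..p} (\<lambda>q. phi_g (q, t))"
  define c where "c = phi_g (p, t) / (2 * (ca_g (p, t))\<^sup>2)"
  have "ca_curv C q t * ca_metric C q t = phi_g (q, t)" for q
    unfolding ca_curv_eq ca_metric_eq using ca_g_nonzero[of "(q, t)"] by simp
  then have "(Dt X (p, t), Dt Y (p, t)) = a *\<^sub>R (X (p, t), Y (p, t))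
      + (phi_g (p, t) / ca_g (p, t) / 2) *\<^sub>R (Dp X (p, t) / ca_g (p, t), Dp Y (p, t) / ca_g (p, t))"
    using flow[OF p, of t] unfolding dT_C_coords ca_curv_eq Cxi_coords a_def by (simp add: C_coords)
  then have xt: "Dt X (p, t) = a * X (p, t) + c * Dp X (p, t)"
    and yt: "Dt Y (p, t) = a * Y (p, t) + c * Dp Y (p, t)"
    unfolding c_def by (simp_all add: power2_eq_square)
  show "coeff_C (p, t) = lam + integral {p0..p} (\<lambda>q. phi_g (q, t))"
    unfolding a_def[symmetric] coeff_C_def using detCCp_nonzero[of "(p, t)"]
    unfolding detCCp_def xt yt by (simp add: field_simps; simp add: algebra_simps)
  show "coeff_Cp (p, t) = phi_g (p, t) / (2 * (ca_g (p, t))\<^sup>2)"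
    unfolding c_def[symmetric] coeff_Cp_def using detCCp_nonzero[of "(p, t)"]
    unfolding detCCp_def xt yt by (simp add: field_simps; simp add: algebra_simps)
qed

text \<open>The flow is only prescribed on one period; periodicity of both sides extends the identities
  to all of \<open>p\<close>.\<close>

lemma periodic_p_eqI:
  assumes "periodic_p f" "periodic_p g" "\<And>p t. p \<in> {p0..<p0 + 1} \<Longrightarrow> f (p, t) = g (p, t)"
  shows "f z = g z"
proof -
  obtain p t where z: "z = (p, t)" by fastforce
  obtain q where "q \<in> {p0..<p0 + 1}" "\<And>f. periodic_p f \<Longrightarrow> f (p, t) = f (q, t)"
    using periodic_p_reduce by blast
  then show ?thesis unfolding z using assms by metis
qed

lemma coeff_Cp_eq: "coeff_Cp z = phi_g z * detCCp z / (2 * detCpCpp z)"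
proof (rule periodic_p_eqI[OF periodic_coeff_Cp])
  show "periodic_p (\<lambda>z. phi_g z * detCCp z / (2 * detCpCpp z))"
    using periodic_phi_g periodic_detCCp periodic_detCpCpp unfolding periodic_p_def by simp
  show "coeff_Cp (p, t) = phi_g (p, t) * detCCp (p, t) / (2 * detCpCpp (p, t))"
    if "p \<in> {p0..<p0 + 1}" for p t
    unfolding coeffs_on_period(2)[OF that] ca_g_squared
    using detCCp_nonzero[of "(p, t)"] detCpCpp_nonzero[of "(p, t)"] by (simp add: field_simps)
qed

lemma Dp_coeff_C: "Dp coeff_C z = phi_g z"
proof (rule periodic_p_eqI[OF periodic_p_dir_deriv[OF periodic_coeff_C] periodic_phi_g])
  fix p t assume p: "p \<in> {p0..<p0 + 1}"
  have inner: "Dp coeff_C (q, t) = phi_g (q, t)" if q: "q \<in> {p0<..<p0 + 1}" for q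
  proof -
    have "((\<lambda>x. lam + integral {p0..x} (\<lambda>q. phi_g (q, t))) has_real_derivative phi_g (q, t)) (at q)"
      using q by (auto intro!: derivative_eq_intros has_real_derivative_integral_upper
          smooth_real_continuous_on_p smooth_phi_g)
    then have "((\<lambda>x. coeff_C (x, t)) has_real_derivative phi_g (q, t)) (at q)"
      by (rule has_field_derivative_transform_within_open[where S="{p0<..<p0 + 1}"])
         (use q coeffs_on_period(1) in auto)
    from DERIV_unique[OF smooth_real_Dp_deriv[OF smooth_coeff_C] this] show ?thesis .
  qed
  have "isCont (\<lambda>x. Dp coeff_C (x, t) - phi_g (x, t)) p0"
    by (intro continuous_intros smooth_real_isCont_p smooth_real_dir_deriv smooth_coeff_C smooth_phi_g)
  then have "((\<lambda>x. Dp coeff_C (x, t) - phi_g (x, t)) \<longlongrightarrow> Dp coeff_C (p0, t) - phi_g (p0, t))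
      (at_right p0)"
    by (simp add: isCont_def filterlim_at_split)
  moreover have "((\<lambda>x. Dp coeff_C (x, t) - phi_g (x, t)) \<longlongrightarrow> 0) (at_right p0)"
    by (rule tendsto_eventually, unfold eventually_at_right_field)
       (use inner in \<open>intro exI[of _ "p0 + 1"], auto\<close>)
  ultimately have "Dp coeff_C (p0, t) - phi_g (p0, t) = 0"
    by (rule tendsto_unique[OF trivial_limit_at_right_real])
  then show "Dp coeff_C (p, t) = phi_g (p, t)"
    using p inner by (cases "p = p0") auto
qed

lemma Dt_Dp_of_transported:
  assumes f: "smooth_real f" and Dt_f: "\<And>z. Dt f z = coeff_C z * f z + coeff_Cp z * Dp f z"
  shows "Dt (Dp f) z = phi_g z * f z + coeff_C z * Dp f z + Dp coeff_Cp z * Dp f z + coeff_Cp z * Dp (Dp f) z"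
proof -
  have "Dt (Dp f) = Dp (\<lambda>z. coeff_C z * f z + coeff_Cp z * Dp f z)"
    unfolding Dt_Dp_commute[OF f] using Dt_f by presburger
  then show ?thesis
    by (simp add: dir_deriv_add dir_deriv_mult smooth_real_mult f Dp_coeff_C algebra_simps)
qed

lemma Dt_Dp_Dp_of_transported:
  assumes f: "smooth_real f" and Dt_f: "\<And>z. Dt f z = coeff_C z * f z + coeff_Cp z * Dp f z"
  shows "Dt (Dp (Dp f)) z = Dp phi_g z * f z + 2 * phi_g z * Dp f z + coeff_C z * Dp (Dp f) z
           + Dp (Dp coeff_Cp) z * Dp f z + 2 * Dp coeff_Cp z * Dp (Dp f) z + coeff_Cp z * Dp (Dp (Dp f)) z"
proof -
  have "Dt (Dp (Dp f)) = Dp (\<lambda>z. phi_g z * f z + coeff_C z * Dp f z + Dp coeff_Cp z * Dp f z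
                                + coeff_Cp z * Dp (Dp f) z)"
    unfolding Dt_Dp_commute[OF smooth_real_dir_deriv[OF f]] using Dt_Dp_of_transported[OF f Dt_f]
    by presburger
  then show ?thesis
    by (simp add: dir_deriv_add dir_deriv_mult smooth_real_mult smooth_real_add f Dp_coeff_C algebra_simps)
qed

lemma Dt_detCCp:
  "Dt detCCp z = 2 * coeff_C z * detCCp z + Dp coeff_Cp z * detCCp z + coeff_Cp z * Dp detCCp z"
proof -
  have "Dt detCCp z = Dt X z * Dp Y z + X z * Dt (Dp Y) z - (Dt Y z * Dp X z + Y z * Dt (Dp X) z)"
    unfolding detCCp_def[abs_def] by (simp add: dir_deriv_diff dir_deriv_mult smooth_real_mult)
  then show ?thesis
    unfolding Dt_X_decomp Dt_Y_decomp Dt_Dp_of_transported[OF smooth_X Dt_X_decomp]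
      Dt_Dp_of_transported[OF smooth_Y Dt_Y_decomp] Dp_detCCp detCCp_def
    by (simp add: algebra_simps)
qed

lemma Dt_detCpCpp:
  "Dt detCpCpp z = phi_g z * Dp detCCp z - Dp phi_g z * detCCp z + 2 * coeff_C z * detCpCpp z
     + 3 * Dp coeff_Cp z * detCpCpp z + coeff_Cp z * Dp detCpCpp z"
proof -
  have "Dt detCpCpp z = Dt (Dp X) z * Dp (Dp Y) z + Dp X z * Dt (Dp (Dp Y)) z
      - (Dt (Dp Y) z * Dp (Dp X) z + Dp Y z * Dt (Dp (Dp X)) z)"
    unfolding detCpCpp_def[abs_def] by (simp add: dir_deriv_diff dir_deriv_mult smooth_real_mult)
  then show ?thesis
    unfolding Dt_Dp_of_transported[OF smooth_X Dt_X_decomp] Dt_Dp_of_transported[OF smooth_Y Dt_Y_decomp]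
      Dt_Dp_Dp_of_transported[OF smooth_X Dt_X_decomp] Dt_Dp_Dp_of_transported[OF smooth_Y Dt_Y_decomp]
      Dp_detCCp Dp_detCpCpp detCCp_def detCpCpp_def
    by (simp add: algebra_simps)
qed

lemma Dp_coeff_Cp:
  "Dp coeff_Cp z = ((Dp phi_g z * detCCp z + phi_g z * Dp detCCp z) * (2 * detCpCpp z)
                     - phi_g z * detCCp z * (2 * Dp detCpCpp z)) / (2 * detCpCpp z)\<^sup>2"
proof -
  have "coeff_Cp = (\<lambda>z. phi_g z * detCCp z / (2 * detCpCpp z))"
    using coeff_Cp_eq by blast
  then show ?thesis
    by (simp add: dir_deriv_divide dir_deriv_mult smooth_real_mult detCpCpp_nonzero)
qed

lemma Dt_ca_g: "Dt ca_g z = (phi_g z)\<^sup>2 / (2 * ca_g z)"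
proof -
  have "Dt ca_g = (\<lambda>z. Dt (\<lambda>z. detCpCpp z / detCCp z) z / (2 * sqrt (detCpCpp z / detCCp z)))"
    unfolding ca_g_def[abs_def]
    by (rule dir_deriv_sqrt)
       (intro smooth_real_divide smooth_detCCp smooth_detCpCpp detCCp_nonzero, rule detCpCpp_div_detCCp_pos)
  then have "Dt ca_g z = ((Dt detCpCpp z * detCCp z - detCpCpp z * Dt detCCp z) / (detCCp z)\<^sup>2)
                           / (2 * ca_g z)"
    by (simp add: dir_deriv_divide detCCp_nonzero ca_g_def)
  also have "\<dots> = (phi_g z)\<^sup>2 / (2 * ca_g z)"
    unfolding Dt_detCCp Dt_detCpCpp
    by (subst Dt_metric_identity[OF detCCp_nonzero detCpCpp_nonzero _ coeff_Cp_eq Dp_coeff_Cp])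
       (simp_all add: phi_g_def)
  finally show ?thesis .
qed

text \<open>\<open>Dp_phi\<close> is \<open>\<phi>\<^sub>p\<close>, and \<open>energy_flux\<close> is \<open>\<phi> \<phi>\<^sub>\<xi>\<close>, for \<open>\<phi> = phi_g / ca_g\<close>.\<close>

definition Dp_phi :: "real \<times> real \<Rightarrow> real" where
  "Dp_phi z = (Dp phi_g z * ca_g z - phi_g z * Dp ca_g z) / (ca_g z)\<^sup>2"

definition energy_flux :: "real \<times> real \<Rightarrow> real" where
  "energy_flux z = phi_g z * Dp_phi z / (ca_g z)\<^sup>2"

lemma smooth_Dp_phi [simp]: "smooth_real Dp_phi"
  unfolding Dp_phi_def[abs_def]
  by (intro smooth_real_diff smooth_real_divide smooth_real_mult smooth_real_dir_deriv smooth_phi_g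
      smooth_ca_g smooth_real_power) (simp add: ca_g_nonzero)

lemma smooth_energy_flux [simp]: "smooth_real energy_flux"
  unfolding energy_flux_def[abs_def]
  by (intro smooth_real_divide smooth_real_mult smooth_real_power smooth_phi_g smooth_Dp_phi smooth_ca_g)
     (simp add: ca_g_nonzero)

lemma periodic_energy_flux: "periodic_p energy_flux"
  using periodic_phi_g periodic_ca_g periodic_p_dir_deriv[OF periodic_phi_g]
    periodic_p_dir_deriv[OF periodic_ca_g]
  unfolding energy_flux_def Dp_phi_def periodic_p_def by simp

definition phi_g_flux :: "real \<times> real \<Rightarrow> real" where
  "phi_g_flux z = 3/2 * Dt detCCp z / detCCp z - 1/2 * Dt detCpCpp z / detCpCpp z"

lemma Dt_phi_g: "Dt phi_g = Dp phi_g_flux"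
  unfolding phi_g_def[abs_def] phi_g_flux_def[abs_def]
  by (simp add: dir_deriv_diff dir_deriv_divide dir_deriv_mult smooth_real_mult smooth_real_divide
      detCCp_nonzero detCpCpp_nonzero Dt_Dp_commute) (simp add: fun_eq_iff algebra_simps)

lemma phi_g_flux_eq: "phi_g_flux = (\<lambda>z. 2 * coeff_C z + Dp_phi z / (2 * ca_g z))"
proof
  fix z
  show "phi_g_flux z = 2 * coeff_C z + Dp_phi z / (2 * ca_g z)"
    unfolding phi_g_flux_def Dp_phi_def Dt_detCCp Dt_detCpCpp
    by (rule phi_g_flux_identity[OF detCCp_nonzero detCpCpp_nonzero ca_g_pos ca_g_squared _
          coeff_Cp_eq Dp_ca_g]) (simp add: phi_g_def)
qed

lemma Dt_energy_density:
  "Dt energy_density z = Dp energy_flux z - (Dp_phi z)\<^sup>2 / ca_g z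
     - (phi_g z)^4 / (2 * (ca_g z)^3) + 4 * (phi_g z)\<^sup>2 / ca_g z"
proof -
  have dW: "Dt energy_density z = (2 * phi_g z * Dt phi_g z * ca_g z - (phi_g z)\<^sup>2 * Dt ca_g z)
                                   / (ca_g z)\<^sup>2"
    unfolding energy_density_def[abs_def]
    by (simp add: dir_deriv_divide dir_deriv_power2 ca_g_nonzero smooth_real_power)
  have dQ: "Dp phi_g_flux z = 2 * phi_g z + (Dp Dp_phi z * (2 * ca_g z) - Dp_phi z * (2 * Dp ca_g z))
                                            / (2 * ca_g z)\<^sup>2"
    unfolding phi_g_flux_eq
    by (simp add: dir_deriv_add dir_deriv_divide dir_deriv_mult smooth_real_mult smooth_real_divide
        ca_g_nonzero Dp_coeff_C)
  have dH: "Dp energy_flux z = ((Dp phi_g z * Dp_phi z + phi_g z * Dp Dp_phi z) * (ca_g z)\<^sup>2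
                                - phi_g z * Dp_phi z * (2 * ca_g z * Dp ca_g z)) / ((ca_g z)\<^sup>2)\<^sup>2"
    unfolding energy_flux_def[abs_def]
    by (simp add: dir_deriv_divide dir_deriv_mult dir_deriv_power2 smooth_real_mult smooth_real_power
        ca_g_nonzero)
  show ?thesis
    unfolding dW Dt_phi_g dQ dH Dt_ca_g Dp_phi_def
    by (rule Dt_energy_density_identity[OF ca_g_pos])
qed

lemma has_real_derivative_energy:
  "(energy C has_real_derivative integral {0..1} (\<lambda>p. Dt energy_density (p, t))) (at t)"
  unfolding energy_eq by (rule has_real_derivative_integral_p[OF smooth_energy_density])

lemma integral_Dt_energy_density_le: "integral {0..1} (\<lambda>p. Dt energy_density (p, t)) \<le> 4 * energy C t"
proof -
  have "integral {0..1} (\<lambda>p. Dt energy_density (p, t))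
      \<le> integral {0..1} (\<lambda>p. Dp energy_flux (p, t) + 4 * energy_density (p, t))"
  proof (rule integral_le)
    show "(\<lambda>p. Dp energy_flux (p, t) + 4 * energy_density (p, t)) integrable_on {0..1}"
      using smooth_real_integrable_on_p[of "\<lambda>z. Dp energy_flux z + 4 * energy_density z"]
      by (simp add: smooth_real_add smooth_real_mult)
    have "(Dp_phi (p, t))\<^sup>2 / ca_g (p, t) \<ge> 0" "(phi_g (p, t))^4 / (2 * (ca_g (p, t))^3) \<ge> 0" for p
      using ca_g_pos[of "(p, t)"] by (simp_all add: zero_le_even_power)
    then show "Dt energy_density (p, t) \<le> Dp energy_flux (p, t) + 4 * energy_density (p, t)" for p
      unfolding Dt_energy_density energy_density_def by (simp add: algebra_simps)
  qed (simp add: smooth_real_integrable_on_p)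
  also have "\<dots> = integral {0..1} (\<lambda>p. Dp energy_flux (p, t)) + 4 * energy C t"
    unfolding energy_eq by (subst integral_add) (auto intro: smooth_real_integrable_on_p)
  also have "integral {0..1} (\<lambda>p. Dp energy_flux (p, t)) = 0"
    using integral_Dp_periodic[OF smooth_energy_flux periodic_energy_flux, of 0] by simp
  finally show ?thesis by simp
qed

definition ca_length :: "real \<Rightarrow> real" where
  "ca_length t = integral {0..1} (\<lambda>p. ca_g (p, t))"

lemma ca_length_nonneg: "ca_length t \<ge> 0"
  unfolding ca_length_def
  by (rule integral_nonneg[OF smooth_real_integrable_on_p[OF smooth_ca_g]])
     (simp add: less_imp_le[OF ca_g_pos])

lemma has_real_derivative_ca_length: "(ca_length has_real_derivative energy C t / 2) (at t)"
proof -
  have "(\<lambda>p. Dt ca_g (p, t)) = (\<lambda>p. energy_density (p, t) * (1/2))"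
    unfolding Dt_ca_g energy_density_def using ca_g_nonzero by (auto simp: field_simps)
  then show ?thesis
    using has_real_derivative_integral_p[OF smooth_ca_g, of 0 1 t]
    unfolding ca_length_def[abs_def] energy_eq by simp
qed

lemma energy_tendsto_zero: "(energy C \<longlongrightarrow> 0) at_bot"
proof (rule tendsto_zero_at_bot_of_growth_bound[where c=4])
  show "((\<lambda>t. 2 * ca_length t) has_real_derivative energy C t) (at t)" for t
    using DERIV_cmult[OF has_real_derivative_ca_length, of 2] by simp
  show "0 \<le> 2 * ca_length t" for t
    using ca_length_nonneg by simp
  show "0 \<le> energy C t" for t
    unfolding energy_eq
    by (rule integral_nonneg[OF smooth_real_integrable_on_p[OF smooth_energy_density]])
       (rule energy_density_nonneg)
qed (auto intro: has_real_derivative_energy integral_Dt_energy_density_le)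

end

theorem proposition6p6:
  fixes C :: "real \<Rightarrow> real \<Rightarrow> real \<times> real" and lam p0 :: real
  assumes smooth: "smooth_map (\<lambda>(p, t). C p t)"
    and closed: "\<And>p t. C (p + 1) t = C p t"
    and embedded: "\<And>t. inj_on (\<lambda>p. C p t) {0..<1}"
    and nondeg1: "\<And>p t. det2 (C p t) (dP C p t) \<noteq> 0"
    and nondeg2: "\<And>p t. det2 (dP C p t) (dP (dP C) p t) \<noteq> 0"
    and convex: "\<And>p q t. det2 (dP C p t) (C q t - C p t) * det2 (dP C p t) (dP (dP C) p t) \<ge> 0"
    and flow: "\<And>p t. p \<in> {p0..<p0 + 1} \<Longrightarrow>
        dT C p t = (lam + integral {p0..p} (\<lambda>q. ca_curv C q t * ca_metric C q t)) *\<^sub>R C p t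
                   + (ca_curv C p t / 2) *\<^sub>R Cxi C p t"
    and bounded: "\<exists>M. \<forall>p t. \<bar>ca_curv C p t\<bar> \<le> M"
  shows "(energy C \<longlongrightarrow> 0) at_bot"
proof -
  interpret ca_flow C lam p0
    using smooth closed nondeg1 nondeg2 flow by unfold_locales
  show ?thesis by (rule energy_tendsto_zero)
qed

end
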